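(* Let $K$ be a compact line and let $G:K\to\mathbb{R}$ be an amenable function. Then $\lim_{y\searrow 0_K}L_G(y)=G(0_K)$.
   Context: A compact line is a compact space $K$ whose topology is the order topology of a linear order on $K$; $0_K$ and $1_K$ denote its minimum and maximum, and $0_K<1_K$. A point $x\in(0_K,1_K]$ is left-isolated if it has an immediate predecessor $x^-$ and left-dense otherwise; $x\in[0_K,1_K)$ is right-dense if it has no immediate successor. $G$ is regulated if for every left-dense $x$ the limit $\lim_{y\nearrow x}G(y)$ exists and for every right-dense $x$, $\lim_{y\searrow x}G(y)=G(x)$; $G$ is amenable if it is regulated and right-continuous. For regulated $G$, $L_G(0_K)=0$, $L_G(x)=\lim_{y\nearrow x}G(y)$ if $x\in(0_K,1_K]$ is left-dense, and $L_G(x)=G(x^-)$ if $x$ is left-isolated. The limit $y\searrow 0_K$ is along $y>0_K$ decreasing to $0_K$. *)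

theory Defs
  imports "HOL-Analysis.Analysis"
begin

text \<open>A compact line is modelled as a type of class linorder_topology (order topology
  of a linear order) whose universe is compact, with at least two points.\<close>

definition zeroK :: "'a::linorder" where
  "zeroK = (THE x. \<forall>y. x \<le> y)"

definition oneK :: "'a::linorder" where
  "oneK = (THE x. \<forall>y. y \<le> x)"

definition left_isolated :: "'a::linorder \<Rightarrow> bool" where
  "left_isolated x \<longleftrightarrow> (\<exists>p. p < x \<and> (\<forall>z. \<not> (p < z \<and> z < x)))"

definition pred_pt :: "'a::linorder \<Rightarrow> 'a" where
  "pred_pt x = (THE p. p < x \<and> (\<forall>z. \<not> (p < z \<and> z < x)))"

definition right_dense :: "'a::linorder \<Rightarrow> bool" where
  "right_dense x \<longleftrightarrow> x \<noteq> oneK \<and> \<not> (\<exists>s. x < s \<and> (\<forall>z. \<not> (x < z \<and> z < s)))"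

definition regulated :: "('a::linorder_topology \<Rightarrow> real) \<Rightarrow> bool" where
  "regulated G \<longleftrightarrow>
     (\<forall>x. x \<noteq> zeroK \<and> \<not> left_isolated x \<longrightarrow> (\<exists>l. (G \<longlongrightarrow> l) (at_left x))) \<and>
     (\<forall>x. right_dense x \<longrightarrow> (G \<longlongrightarrow> G x) (at_right x))"

definition right_continuous :: "('a::linorder_topology \<Rightarrow> real) \<Rightarrow> bool" where
  "right_continuous G \<longleftrightarrow> (\<forall>x. continuous (at x within {x..}) G)"

definition amenable :: "('a::linorder_topology \<Rightarrow> real) \<Rightarrow> bool" where
  "amenable G \<longleftrightarrow> regulated G \<and> right_continuous G"

definition LG :: "('a::linorder_topology \<Rightarrow> real) \<Rightarrow> 'a \<Rightarrow> real" where
  "LG G x = (if x = zeroK then 0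
             else if left_isolated x then G (pred_pt x)
             else Lim (at_left x) G)"

end

theory Submission
  imports Defs
begin

text \<open>If \<open>0\<^sub>K\<close> has an immediate successor, the filter \<open>y \<searrow> 0\<^sub>K\<close> is trivial. Otherwise
  \<open>0\<^sub>K\<close> is right-dense, so \<open>G(w)\<close> is close to \<open>G(0\<^sub>K)\<close> for all \<open>w \<in> [0\<^sub>K, b)\<close>. For
  \<open>y \<in> (0\<^sub>K, b)\<close> the value \<open>L\<^sub>G(y)\<close> is either \<open>G(y\<^sup>-)\<close> with \<open>y\<^sup>- < y\<close> or a limit of values
  \<open>G(w)\<close> with \<open>w < y\<close>, hence it is just as close to \<open>G(0\<^sub>K)\<close>.\<close>

lemma zeroK_le:
  assumes "compact (UNIV :: 'a::linorder_topology set)"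
  shows "(zeroK :: 'a) \<le> y"
proof -
  obtain s :: 'a where s: "\<And>t. s \<le> t"
    using compact_attains_inf[OF assms] by auto
  have "zeroK = s" unfolding zeroK_def
    by (rule the_equality) (use s in \<open>auto intro: order.antisym\<close>)
  then show ?thesis using s by simp
qed

lemma pred_pt_less:
  assumes "left_isolated (y :: 'a::linorder)"
  shows "pred_pt y < y"
proof -
  obtain p where p: "p < y" "\<forall>z. \<not> (p < z \<and> z < y)"
    using assms unfolding left_isolated_def by auto
  have "pred_pt y = p" unfolding pred_pt_def
    by (rule the_equality) (use p in \<open>auto, metis not_less_iff_gr_or_eq\<close>)
  then show ?thesis using p by simp
qed

lemma at_right_eq_bot_if_successor:
  assumes "(x :: 'a::linorder_topology) < s" and "\<forall>z. \<not> (x < z \<and> z < s)"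
  shows "at_right x = bot"
  using assms by (auto simp: trivial_limit_def eventually_at_right)

lemma at_left_neq_bot_if_not_left_isolated:
  assumes "(a :: 'a::linorder_topology) < y" and "\<not> left_isolated y"
  shows "at_left y \<noteq> bot"
proof
  assume "at_left y = bot"
  then obtain c where "c < y" "\<forall>w>c. w < y \<longrightarrow> False"
    using eventually_at_left[OF assms(1), of "\<lambda>_. False"] by auto
  then show False using assms(2) unfolding left_isolated_def by auto
qed

lemma LG_dist_le:
  fixes G :: "'a::linorder_topology \<Rightarrow> real"
  assumes "regulated G" and "zeroK < y" and bound: "\<And>w. w < y \<Longrightarrow> dist (G w) c \<le> r"
  shows "dist (LG G y) c \<le> r"
proof (cases "left_isolated y")
  case True
  then show ?thesis
    using assms(2) bound[OF pred_pt_less] unfolding LG_def by auto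
next
  case False
  obtain l where l: "(G \<longlongrightarrow> l) (at_left y)"
    using assms(1,2) False unfolding regulated_def by (metis less_irrefl)
  have nontrivial: "at_left y \<noteq> bot"
    using at_left_neq_bot_if_not_left_isolated[OF assms(2) False] .
  have "eventually (\<lambda>w. dist (G w) c \<le> r) (at_left y)"
    using bound by (auto simp: eventually_at_filter)
  moreover have "((\<lambda>w. dist (G w) c) \<longlongrightarrow> dist l c) (at_left y)"
    by (intro tendsto_intros l)
  ultimately have "dist l c \<le> r"
    using tendsto_upperbound nontrivial by blast
  then show ?thesis
    using assms(2) False tendsto_Lim[OF nontrivial l] unfolding LG_def by auto
qed

lemma LG_tendsto_at_right_zeroK:
  fixes G :: "'a::linorder_topology \<Rightarrow> real"
  assumes "compact (UNIV :: 'a set)" and "(zeroK :: 'a) < oneK" and reg: "regulated G"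
    and G_right: "(G \<longlongrightarrow> G zeroK) (at_right zeroK)"
  shows "(LG G \<longlongrightarrow> G zeroK) (at_right zeroK)"
proof (rule tendstoI)
  fix e :: real assume "e > 0"
  then have "eventually (\<lambda>w. dist (G w) (G zeroK) < e/2) (at_right zeroK)"
    using G_right by (intro tendstoD) auto
  then obtain b where "b > zeroK" and b: "\<And>w. zeroK < w \<Longrightarrow> w < b \<Longrightarrow> dist (G w) (G zeroK) < e/2"
    using eventually_at_right[OF assms(2)] by auto
  have "dist (LG G y) (G zeroK) < e" if "zeroK < y" "y < b" for y
  proof -
    have "dist (G w) (G zeroK) \<le> e/2" if "w < y" for w
      using b[of w] \<open>w < y\<close> \<open>y < b\<close> \<open>e > 0\<close> zeroK_le[OF assms(1), of w]
      by (cases "w = zeroK") (auto simp: le_less intro: less_imp_le)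
    then show ?thesis using LG_dist_le[OF reg \<open>zeroK < y\<close>] \<open>e > 0\<close> by fastforce
  qed
  then show "eventually (\<lambda>y. dist (LG G y) (G zeroK) < e) (at_right zeroK)"
    unfolding eventually_at_right[OF assms(2)] using \<open>b > zeroK\<close> by blast
qed

theorem lemma5p3:
  fixes G :: "'a::linorder_topology \<Rightarrow> real"
  assumes "compact (UNIV :: 'a set)"
    and "(zeroK :: 'a) < oneK"
    and "amenable G"
  shows "(LG G \<longlongrightarrow> G zeroK) (at_right zeroK)"
proof (cases "right_dense (zeroK :: 'a)")
  case False
  then obtain s :: 'a where "zeroK < s" "\<forall>z. \<not> (zeroK < z \<and> z < s)"
    using assms(2) unfolding right_dense_def by auto
  then show ?thesis by (simp add: at_right_eq_bot_if_successor)
next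
  case True
  have "regulated G" using assms(3) unfolding amenable_def by simp
  moreover from this True have "(G \<longlongrightarrow> G zeroK) (at_right zeroK)"
    unfolding regulated_def by blast
  ultimately show ?thesis using LG_tendsto_at_right_zeroK assms(1,2) by blast
qed

end
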